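(* For every environment $E$, every total preorder on $\Pi^E$ induced by a Regularised RL specification is also induced by some Function-from-Trajectory-Lotteries-to-Reals specification; i.e. $\mathrm{Ord}_{\mathrm{RRL}}(E)\subseteq\mathrm{Ord}_{\mathrm{FTLR}}(E)$. In particular, for every RRL specification and all $\pi_1,\pi_2\in\Pi^E$, $L_{\pi_1}=L_{\pi_2}$ implies $J_{\mathrm{RRL}}(\pi_1)=J_{\mathrm{RRL}}(\pi_2)$.
   Context: An environment is a tuple $E=(\mathcal S,\mathcal A,\mathcal T,\mathcal I)$ where $\mathcal S,\mathcal A$ are finite nonempty sets, $\mathcal T:\mathcal S\times\mathcal A\to\Delta(\mathcal S)$ and $\mathcal I\in\Delta(\mathcal S)$. A policy is a map $\pi:\mathcal S\to\Delta(\mathcal A)$ (stationary, possibly stochastic); $\Pi^E$ denotes the set of all policies. A trajectory $\xi=(s_0,a_0,s_1,a_1,\dots)$ is generated under $\pi$ by $s_0\sim\mathcal I$, $a_t\sim\pi(s_t)$, $s_{t+1}\sim\mathcal T(s_t,a_t)$; $\mathbb E^\pi_\xi$ denotes expectation under this distribution. An objective-specification formalism $X$ assigns to each environment $E$ a set of objective specifications, each inducing a total preorder $\succeq$ on $\Pi^E$; $\mathrm{Ord}_X(E)$ is the set of total preorders so induced. A specification defining a scalar $J:\Pi^E\to\mathbb R$ induces $\pi_1\succeq\pi_2\iff J(\pi_1)\ge J(\pi_2)$. Trajectory lottery: $L_{k,\pi}$ is the distribution of $(s_0,a_0,\dots,a_{k-1},s_k)$ under $\pi$, $L_\pi=(L_{0,\pi},L_{1,\pi},\dots)$,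 $L_{\Pi^E}=\{L_\pi:\pi\in\Pi^E\}$. RRL: specification $(\mathcal R,\alpha,F,\gamma)$ with $\mathcal R:\mathcal S\times\mathcal A\times\mathcal S\to\mathbb R$, $\alpha\in\mathbb R$, $F:\Delta(\mathcal A)\to\mathbb R$, $\gamma\in[0,1)$; $J_{\mathrm{RRL}}(\pi)=\mathbb E^\pi_\xi\big[\sum_{t=0}^\infty\gamma^t\big(\mathcal R(s_t,a_t,s_{t+1})-\alpha F(\pi(s_t))\big)\big]$. FTLR: specification $(f)$ with $f:L_{\Pi^E}\to\mathbb R$; $J(\pi)=f(L_\pi)$. *)

theory Defs
  imports "HOL-Probability.Probability"
begin

text \<open>Environment E = (S, A, T, I): S and A are the finite (nonempty) types 's and 'a,
  T :: 's => 'a => 's pmf, I :: 's pmf.\<close>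

type_synonym ('s, 'a) policy = "'s \<Rightarrow> 'a pmf"

text \<open>Finite trajectory (s_0, a_0, ..., a_{k-1}, s_k), represented as the list of
  pairs [(s_0,a_0), ..., (s_{k-1},a_{k-1})] together with the final state s_k.\<close>

type_synonym ('s, 'a) ftraj = "('s \<times> 'a) list \<times> 's"

fun traj_lottery_k ::
  "'s pmf \<Rightarrow> ('s \<Rightarrow> 'a \<Rightarrow> 's pmf) \<Rightarrow> ('s, 'a) policy \<Rightarrow> nat \<Rightarrow> ('s, 'a) ftraj pmf" where
  "traj_lottery_k I T \<pi> 0 = map_pmf (\<lambda>s. ([], s)) I"
| "traj_lottery_k I T \<pi> (Suc k) =
     bind_pmf (traj_lottery_k I T \<pi> k) (\<lambda>(h, s).
       bind_pmf (\<pi> s) (\<lambda>a. map_pmf (\<lambda>s'. (h @ [(s, a)], s')) (T s a)))"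

definition traj_lottery ::
  "'s pmf \<Rightarrow> ('s \<Rightarrow> 'a \<Rightarrow> 's pmf) \<Rightarrow> ('s, 'a) policy \<Rightarrow> nat \<Rightarrow> ('s, 'a) ftraj pmf" where
  "traj_lottery I T \<pi> = (\<lambda>k. traj_lottery_k I T \<pi> k)"

definition rrl_partial_return ::
  "('s \<Rightarrow> 'a \<Rightarrow> 's \<Rightarrow> real) \<Rightarrow> real \<Rightarrow> ('a pmf \<Rightarrow> real) \<Rightarrow> real \<Rightarrow> ('s, 'a) policy
     \<Rightarrow> ('s, 'a) ftraj \<Rightarrow> real" where
  "rrl_partial_return R \<alpha> F \<gamma> \<pi> \<xi> =
     (let h = fst \<xi>; sl = snd \<xi>;
          nxt = (\<lambda>t. if Suc t < length h then fst (h ! Suc t) else sl)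
      in (\<Sum>t<length h. \<gamma> ^ t *
            (R (fst (h ! t)) (snd (h ! t)) (nxt t) - \<alpha> * F (\<pi> (fst (h ! t))))))"

text \<open>J_RRL(pi): expectation of the infinite discounted regularised return, expressed as
  the limit of the expected n-step truncated returns (these converge since S, A are finite
  and gamma < 1).\<close>

definition J_RRL ::
  "'s pmf \<Rightarrow> ('s \<Rightarrow> 'a \<Rightarrow> 's pmf) \<Rightarrow> ('s \<Rightarrow> 'a \<Rightarrow> 's \<Rightarrow> real) \<Rightarrow> real \<Rightarrow> ('a pmf \<Rightarrow> real)
     \<Rightarrow> real \<Rightarrow> ('s, 'a) policy \<Rightarrow> real" where
  "J_RRL I T R \<alpha> F \<gamma> \<pi> =
     lim (\<lambda>n. measure_pmf.expectation (traj_lottery_k I T \<pi> n) (rrl_partial_return R \<alpha> F \<gamma> \<pi>))"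

definition induced_order :: "(('s, 'a) policy \<Rightarrow> real) \<Rightarrow> ('s, 'a) policy \<Rightarrow> ('s, 'a) policy \<Rightarrow> bool" where
  "induced_order J = (\<lambda>\<pi>1 \<pi>2. J \<pi>1 \<ge> J \<pi>2)"

definition Ord_RRL ::
  "'s pmf \<Rightarrow> ('s \<Rightarrow> 'a \<Rightarrow> 's pmf) \<Rightarrow> (('s, 'a) policy \<Rightarrow> ('s, 'a) policy \<Rightarrow> bool) set" where
  "Ord_RRL I T = {ord. \<exists>R \<alpha> F \<gamma>. 0 \<le> \<gamma> \<and> \<gamma> < 1 \<and> ord = induced_order (J_RRL I T R \<alpha> F \<gamma>)}"

text \<open>FTLR: f is a real function on trajectory lotteries (only its values on L_{Pi^E} matter).\<close>

definition Ord_FTLR ::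
  "'s pmf \<Rightarrow> ('s \<Rightarrow> 'a \<Rightarrow> 's pmf) \<Rightarrow> (('s, 'a) policy \<Rightarrow> ('s, 'a) policy \<Rightarrow> bool) set" where
  "Ord_FTLR I T = {ord. \<exists>f :: (nat \<Rightarrow> ('s, 'a) ftraj pmf) \<Rightarrow> real.
                      ord = induced_order (\<lambda>\<pi>. f (traj_lottery I T \<pi>))}"

end

theory Submission imports Defs begin

text \<open>The trajectory lottery determines the policy on every reachable state: the probability
  of a history extended by the step (s, a) is the probability of reaching s times \<pi> s a, so
  \<pi> s can be read off whenever s is reached with positive probability.  The regularised return
  of a trajectory only evaluates the policy on states visited along it, and these are reachable.
  Hence J_RRL is constant on the fibres of \<pi> \<mapsto> L_\<pi> and factors through L_\<pi>.\<close>

lemma traj_lottery_k_prefix_in_support: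
  assumes "(h, s) \<in> set_pmf (traj_lottery_k I T \<pi> k)"
  shows "length h = k \<and>
    (\<forall>t<length h. (take t h, fst (h ! t)) \<in> set_pmf (traj_lottery_k I T \<pi> t))"
  using assms
proof (induction k arbitrary: h s)
  case 0
  then show ?case by auto
next
  case (Suc k)
  then obtain h0 s0 a where h0: "(h0, s0) \<in> set_pmf (traj_lottery_k I T \<pi> k)"
    and h: "h = h0 @ [(s0, a)]"
    by (auto split: prod.splits)
  have "length h = Suc k"
    using Suc.IH[OF h0] h by simp
  moreover have "t < length h \<Longrightarrow> (take t h, fst (h ! t)) \<in> set_pmf (traj_lottery_k I T \<pi> t)" for t
    using Suc.IH[OF h0] h0 h by (auto simp: nth_append less_Suc_eq)
  ultimately show ?case
    by blast
qed

lemma pmf_history_traj_lottery_Suc: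
  "pmf (map_pmf fst (traj_lottery_k I T \<pi> (Suc k))) (h @ [(s, a)]) =
     pmf (traj_lottery_k I T \<pi> k) (h, s) * pmf (\<pi> s) a"
proof -
  have "map_pmf fst (traj_lottery_k I T \<pi> (Suc k)) =
     bind_pmf (traj_lottery_k I T \<pi> k) (\<lambda>(h0, s0). map_pmf (\<lambda>a0. h0 @ [(s0, a0)]) (\<pi> s0))"
    unfolding traj_lottery_k.simps map_bind_pmf
    by (rule bind_pmf_cong[OF refl])
      (auto simp: map_bind_pmf map_pmf_comp map_pmf_const bind_return_pmf' split: prod.splits; simp add: map_pmf_def)
  also have "pmf \<dots> (h @ [(s, a)]) =
     measure_pmf.expectation (traj_lottery_k I T \<pi> k) (\<lambda>x. indicator {(h, s)} x * pmf (\<pi> s) a)"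
    unfolding pmf_bind
  proof (rule Bochner_Integration.integral_cong[OF refl], clarify)
    fix h0 s0
    show "pmf (map_pmf (\<lambda>a0. h0 @ [(s0, a0)]) (\<pi> s0)) (h @ [(s, a)])
        = indicator {(h, s)} (h0, s0) * pmf (\<pi> s) a"
    proof (cases "h0 = h \<and> s0 = s")
      case True
      then show ?thesis
        using pmf_map_inj'[of "\<lambda>a0. h @ [(s, a0)]" "\<pi> s" a] by (simp add: inj_def)
    next
      case False
      then have "h @ [(s, a)] \<notin> set_pmf (map_pmf (\<lambda>a0. h0 @ [(s0, a0)]) (\<pi> s0))" by auto
      then show ?thesis
        using False by (auto simp: pmf_eq_0_set_pmf indicator_def)
    qed
  qed
  also have "\<dots> = pmf (traj_lottery_k I T \<pi> k) (h, s) * pmf (\<pi> s) a"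
    by (simp add: measure_pmf_single)
  finally show ?thesis .
qed

lemma policy_eq_if_traj_lottery_eq:
  assumes L: "traj_lottery I T \<pi>1 = traj_lottery I T \<pi>2"
    and reached: "(h, s) \<in> set_pmf (traj_lottery_k I T \<pi>1 k)"
  shows "\<pi>1 s = \<pi>2 s"
proof (rule pmf_eqI)
  fix a
  have Lk: "traj_lottery_k I T \<pi>1 n = traj_lottery_k I T \<pi>2 n" for n
    using L unfolding traj_lottery_def by metis
  have "pmf (traj_lottery_k I T \<pi>1 k) (h, s) * pmf (\<pi>1 s) a =
        pmf (traj_lottery_k I T \<pi>1 k) (h, s) * pmf (\<pi>2 s) a"
    using pmf_history_traj_lottery_Suc[of I T \<pi>1 k h s a]
      pmf_history_traj_lottery_Suc[of I T \<pi>2 k h s a] Lk by metis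
  moreover have "pmf (traj_lottery_k I T \<pi>1 k) (h, s) > 0"
    using reached by (simp add: pmf_positive)
  ultimately show "pmf (\<pi>1 s) a = pmf (\<pi>2 s) a" by simp
qed

lemma rrl_partial_return_cong:
  assumes "\<And>t. t < length h \<Longrightarrow> \<pi>1 (fst (h ! t)) = \<pi>2 (fst (h ! t))"
  shows "rrl_partial_return R \<alpha> F \<gamma> \<pi>1 (h, s) = rrl_partial_return R \<alpha> F \<gamma> \<pi>2 (h, s)"
  using assms unfolding rrl_partial_return_def Let_def by (intro sum.cong) auto

lemma J_RRL_eq_if_traj_lottery_eq:
  assumes L: "traj_lottery I T \<pi>1 = traj_lottery I T \<pi>2"
  shows "J_RRL I T R \<alpha> F \<gamma> \<pi>1 = J_RRL I T R \<alpha> F \<gamma> \<pi>2"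
proof -
  have Lk: "traj_lottery_k I T \<pi>1 n = traj_lottery_k I T \<pi>2 n" for n
    using L unfolding traj_lottery_def by metis
  have return_eq: "rrl_partial_return R \<alpha> F \<gamma> \<pi>1 x = rrl_partial_return R \<alpha> F \<gamma> \<pi>2 x"
    if "x \<in> set_pmf (traj_lottery_k I T \<pi>1 n)" for x n
  proof -
    obtain h s where x: "x = (h, s)" by force
    show ?thesis
      unfolding x
    proof (rule rrl_partial_return_cong)
      fix t assume "t < length h"
      then have "(take t h, fst (h ! t)) \<in> set_pmf (traj_lottery_k I T \<pi>1 t)"
        using traj_lottery_k_prefix_in_support[of h s I T \<pi>1 n] that x by simp
      then show "\<pi>1 (fst (h ! t)) = \<pi>2 (fst (h ! t))"
        by (rule policy_eq_if_traj_lottery_eq[OF L])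
    qed
  qed
  have "measure_pmf.expectation (traj_lottery_k I T \<pi>1 n) (rrl_partial_return R \<alpha> F \<gamma> \<pi>1)
      = measure_pmf.expectation (traj_lottery_k I T \<pi>1 n) (rrl_partial_return R \<alpha> F \<gamma> \<pi>2)" for n
    by (rule integral_cong_AE) (auto intro: AE_pmfI return_eq)
  then show ?thesis
    unfolding J_RRL_def Lk by simp
qed

lemma factors_through_if_constant_on_fibres:
  assumes "\<And>x y. g x = g y \<Longrightarrow> J x = J y"
  shows "\<exists>f. J = (\<lambda>x. f (g x))"
proof
  show "J = (\<lambda>x. (J \<circ> inv g) (g x))"
  proof
    fix x
    have "g (inv g (g x)) = g x"
      by (simp add: f_inv_into_f)
    then have "J (inv g (g x)) = J x"
      by (rule assms)
    then show "J x = (J \<circ> inv g) (g x)"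
      by simp
  qed
qed

theorem mainTheorem7:
  fixes I :: "'s::finite pmf" and T :: "'s \<Rightarrow> 'a::finite \<Rightarrow> 's pmf"
  shows "Ord_RRL I T \<subseteq> Ord_FTLR I T
    \<and> (\<forall>(R :: 's \<Rightarrow> 'a \<Rightarrow> 's \<Rightarrow> real) \<alpha> (F :: 'a pmf \<Rightarrow> real) \<gamma> (\<pi>1 :: ('s, 'a) policy) \<pi>2.
         0 \<le> \<gamma> \<longrightarrow> \<gamma> < 1 \<longrightarrow> traj_lottery I T \<pi>1 = traj_lottery I T \<pi>2 \<longrightarrow>
         J_RRL I T R \<alpha> F \<gamma> \<pi>1 = J_RRL I T R \<alpha> F \<gamma> \<pi>2)"
proof (intro conjI subsetI allI impI)
  fix ord assume "ord \<in> Ord_RRL I T"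
  then obtain R \<alpha> F \<gamma> where ord: "ord = induced_order (J_RRL I T R \<alpha> F \<gamma>)"
    unfolding Ord_RRL_def by blast
  have "\<exists>f. J_RRL I T R \<alpha> F \<gamma> = (\<lambda>\<pi>. f (traj_lottery I T \<pi>))"
    by (rule factors_through_if_constant_on_fibres) (rule J_RRL_eq_if_traj_lottery_eq)
  then obtain f where J: "J_RRL I T R \<alpha> F \<gamma> = (\<lambda>\<pi>. f (traj_lottery I T \<pi>))" ..
  show "ord \<in> Ord_FTLR I T"
    unfolding Ord_FTLR_def ord J by blast
qed (rule J_RRL_eq_if_traj_lottery_eq)

end
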